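(* For all $a,b\in[0,\infty]$ with $a\leq b$, there exist sequences $(\ell_p)_{p=1}^\infty$ and $(\gamma_p)_{p=1}^\infty$ of positive reals such that: (a) $\lim_{p\to\infty}\gamma_{2p+1}=a$ and $\lim_{p\to\infty}\gamma_{2p}=b$; (b) $\lim_{p\to\infty}(\ell_{p+1}-\ell_p)=\infty$; (c) $\lim_{p\to\infty}\ell_p/e^{\gamma_p\ell_p}=0$; (d) $\limsup_{p\to\infty}\gamma_{p+1}\ell_{p+1}/\ell_p\leq b$; (e) $\gamma_p\ell_p+1\leq\gamma_{p+1}\ell_{p+1}$ for all $p\in\mathbb N$; (f) for every constant $c\geq0$, $\lim_{p\to\infty}\big(cp+\sum_{j=1}^p\ell_j\big)/e^{\gamma_p\ell_p}=0$. *)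

theory Defs
  imports "HOL-Analysis.Analysis"
begin

end

(*
  Write x_p = g_p * l_p.  Three explicit constructions cover the cases b = \<infinity>,
  a = 0 \<le> b < \<infinity> and 0 < a \<le> b < \<infinity>.

  If b = \<infinity>, take l_p = exp (p^2), let g_{2k+1} = \<alpha>_k \<rightarrow> a with \<alpha>_k \<ge> 1/(k+1) and make
  x_{2k} = x_{2k+1} - 1; since l_{2k+1} / l_{2k} = exp (4k + 1), this forces g_{2k} \<rightarrow> \<infinity>.

  If a = 0 and b is finite, let g_{2k} = \<beta>_k \<rightarrow> b, l_{2k} = exp ((k+2)^2) and place l_{2k+1}
  just k + 1 below l_{2k+2}, with x_{2k+1} = x_{2k} + 1; then l_{2k+1} / l_{2k} \<rightarrow> \<infinity>
  gives g_{2k+1} \<rightarrow> 0, while l_{2k+2} / l_{2k+1} \<rightarrow> 1 keeps the ratio in (d) near b.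

  If 0 < a \<le> b < \<infinity>, let g alternate between b and a and, with r = b / a, let
  l_p = r^\<lceil>p/2\<rceil> (p^2 + 1) / b, so that x_p = r^\<lfloor>p/2\<rfloor> (p^2 + 1) and
  x_{p+1} / l_p = b ((p+1)^2 + 1) / (p^2 + 1).

  In every case x_p grows so fast compared with l_1, ..., l_p that (c) and (f) follow by
  bounding the partial sums by p times a majorant of l.
*)

theory Submission
  imports Defs "HOL-Real_Asymp.Real_Asymp" "HOL-Probability.Characteristic_Functions"
begin

definition admissible :: "ereal \<Rightarrow> ereal \<Rightarrow> (nat \<Rightarrow> real) \<Rightarrow> (nat \<Rightarrow> real) \<Rightarrow> bool" where
  "admissible a b l g \<longleftrightarrow>
    (\<forall>p\<ge>1. l p > 0 \<and> g p > 0) \<and>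
    ((\<lambda>p. ereal (g (2*p+1))) \<longlonglongrightarrow> a) \<and>
    ((\<lambda>p. ereal (g (2*p))) \<longlonglongrightarrow> b) \<and>
    filterlim (\<lambda>p. l (Suc p) - l p) at_top sequentially \<and>
    ((\<lambda>p. l p / exp (g p * l p)) \<longlonglongrightarrow> 0) \<and>
    limsup (\<lambda>p. ereal (g (Suc p) * l (Suc p) / l p)) \<le> b \<and>
    (\<forall>p\<ge>1. g p * l p + 1 \<le> g (Suc p) * l (Suc p)) \<and>
    (\<forall>c::real. c \<ge> 0 \<longrightarrow>
       ((\<lambda>p. (c * real p + (\<Sum>j=1..p. l j)) / exp (g p * l p)) \<longlonglongrightarrow> 0))"

lemma nat_even_odd_cases [case_names even odd]:
  fixes p :: nat
  obtains (even) k where "p = 2 * k" | (odd) k where "p = 2 * k + 1"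
  by (metis evenE oddE)

lemma filterlim_sequentially_even_odd:
  assumes "filterlim (\<lambda>n. f (2 * n)) F sequentially"
    and "filterlim (\<lambda>n. f (2 * n + 1)) F sequentially"
  shows "filterlim f F sequentially"
  using assms by (auto simp: filterlim_iff intro: sequentially_even_odd)

lemma two_mult_le_exp_square: "2 * t \<le> exp (t\<^sup>2)" for t :: real
proof -
  have "2 * t \<le> 1 + t\<^sup>2"
    using sum_squares_bound[of t 1] by simp
  also have "\<dots> \<le> exp (t\<^sup>2)"
    by (rule exp_ge_add_one_self)
  finally show ?thesis .
qed

lemma four_mult_exp_le:
  fixes s t :: real
  assumes "3 \<le> s"
  shows "4 * exp t \<le> exp (t + s)"
proof -
  have "4 \<le> exp s"
    using exp_ge_add_one_self[of s] assms by linarith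
  then show ?thesis
    by (simp add: exp_add)
qed

lemma product_ge_two:
  fixes \<alpha> E :: real
  assumes "1 / (real k + 1) \<le> \<alpha>" and "2 * (real k + 1) \<le> E"
  shows "2 \<le> \<alpha> * E"
proof -
  have "2 \<le> E / (real k + 1)"
    using assms(2) by (simp add: field_simps)
  also have "\<dots> \<le> \<alpha> * E"
    using mult_right_mono[OF assms(1), of E] assms(2) by simp
  finally show ?thesis .
qed

lemma scaled_step_le:
  fixes s t u v d :: real
  assumes "1 \<le> s" "s \<le> t" "0 \<le> d" "0 \<le> u" "u + d \<le> v"
  shows "s * u + d \<le> t * v"
proof -
  have "d \<le> s * d"
    using mult_right_mono[OF assms(1,3)] by simp
  then have "s * u + d \<le> s * (u + d)"
    by (simp add: algebra_simps)
  also have "\<dots> \<le> s * v"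
    using assms by (intro mult_left_mono) auto
  also have "\<dots> \<le> t * v"
    using assms by (intro mult_right_mono) auto
  finally show ?thesis .
qed

lemma partial_sum_div_exp_tendsto_0:
  fixes l U V x :: "nat \<Rightarrow> real"
  assumes nonneg: "\<And>j. 1 \<le> j \<Longrightarrow> 0 \<le> l j"
    and bound: "\<And>j p. 1 \<le> j \<Longrightarrow> j \<le> p \<Longrightarrow> l j \<le> U p"
    and lower: "\<And>p. 1 \<le> p \<Longrightarrow> V p \<le> x p"
    and "0 \<le> c"
    and dominated: "(\<lambda>p. (c * real p + real p * U p) / exp (V p)) \<longlonglongrightarrow> 0"
  shows "(\<lambda>p. (c * real p + (\<Sum>j=1..p. l j)) / exp (x p)) \<longlonglongrightarrow> 0"
proof (rule tendsto_sandwich[OF _ _ tendsto_const dominated])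
  have partial_sum_nonneg: "0 \<le> (\<Sum>j=1..p. l j)" for p
    using nonneg by (intro sum_nonneg) auto
  then show "\<forall>\<^sub>F p in sequentially. 0 \<le> (c * real p + (\<Sum>j=1..p. l j)) / exp (x p)"
    using \<open>0 \<le> c\<close> by simp
  have "(c * real p + (\<Sum>j=1..p. l j)) / exp (x p) \<le> (c * real p + real p * U p) / exp (V p)"
    if "1 \<le> p" for p
  proof (rule frac_le)
    have "(\<Sum>j=1..p. l j) \<le> real (card {1..p}) * U p"
      by (rule sum_bounded_above) (use bound in auto)
    then show "c * real p + (\<Sum>j=1..p. l j) \<le> c * real p + real p * U p"
      by simp
    moreover have "0 \<le> c * real p"
      using \<open>0 \<le> c\<close> by simp
    ultimately show "0 \<le> c * real p + real p * U p"
      using partial_sum_nonneg[of p] by linarith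
    show "exp (V p) \<le> exp (x p)"
      using lower[OF that] by simp
  qed simp
  then show "\<forall>\<^sub>F p in sequentially.
      (c * real p + (\<Sum>j=1..p. l j)) / exp (x p) \<le> (c * real p + real p * U p) / exp (V p)"
    by (rule eventually_sequentiallyI)
qed

lemma term_div_exp_tendsto_0:
  fixes l x :: "nat \<Rightarrow> real"
  assumes nonneg: "\<And>j. 1 \<le> j \<Longrightarrow> 0 \<le> l j"
    and sums: "(\<lambda>p. (\<Sum>j=1..p. l j) / exp (x p)) \<longlonglongrightarrow> 0"
  shows "(\<lambda>p. l p / exp (x p)) \<longlonglongrightarrow> 0"
proof (rule tendsto_sandwich[OF _ _ tendsto_const sums])
  show "\<forall>\<^sub>F p in sequentially. 0 \<le> l p / exp (x p)"
    using nonneg by (intro eventually_sequentiallyI[of 1]) auto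
  have "l p \<le> (\<Sum>j=1..p. l j)" if "1 \<le> p" for p
    by (rule member_le_sum) (use that nonneg in auto)
  then show "\<forall>\<^sub>F p in sequentially. l p / exp (x p) \<le> (\<Sum>j=1..p. l j) / exp (x p)"
    by (intro eventually_sequentiallyI[of 1] divide_right_mono) auto
qed

lemma linear_mult_div_exp_tendsto_0:
  fixes s :: "nat \<Rightarrow> real"
  assumes s: "filterlim s at_top sequentially" and "0 < a" "0 \<le> c"
    and linear: "\<And>p. real p \<le> B * s p"
  shows "(\<lambda>p. (c * real p + real p * s p) / exp (a * s p)) \<longlonglongrightarrow> 0"
proof -
  have "((\<lambda>t. (c + t) * t / exp (a * t)) \<longlongrightarrow> 0) at_top"
    using \<open>0 < a\<close> by real_asymp
  then have "(\<lambda>p. (c + s p) * s p / exp (a * s p)) \<longlonglongrightarrow> 0"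
    by (rule filterlim_compose[OF _ s])
  then have majorant: "(\<lambda>p. B * ((c + s p) * s p / exp (a * s p))) \<longlonglongrightarrow> 0"
    by (rule tendsto_mult_right_zero)
  show ?thesis
  proof (rule tendsto_sandwich[OF _ _ tendsto_const majorant])
    have s_nonneg: "\<forall>\<^sub>F p in sequentially. 0 \<le> s p"
      using s by (simp add: filterlim_at_top)
    then show "\<forall>\<^sub>F p in sequentially. 0 \<le> (c * real p + real p * s p) / exp (a * s p)"
      by eventually_elim (use \<open>0 \<le> c\<close> in simp)
    from s_nonneg show "\<forall>\<^sub>F p in sequentially.
        (c * real p + real p * s p) / exp (a * s p) \<le> B * ((c + s p) * s p / exp (a * s p))"
    proof eventually_elim
      case (elim p)
      have "c * real p + real p * s p = real p * (c + s p)"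
        by (simp add: algebra_simps)
      also have "\<dots> \<le> B * s p * (c + s p)"
        using linear[of p] elim \<open>0 \<le> c\<close> by (intro mult_right_mono) auto
      also have "\<dots> = B * ((c + s p) * s p)"
        by (simp add: algebra_simps)
      finally show ?case
        by (simp add: divide_right_mono)
    qed
  qed
qed

lemma admissibleI:
  fixes l g U V :: "nat \<Rightarrow> real"
  assumes pos: "\<And>p. 1 \<le> p \<Longrightarrow> 0 < l p" "\<And>p. 1 \<le> p \<Longrightarrow> 0 < g p"
    and odd: "(\<lambda>p. ereal (g (2*p+1))) \<longlonglongrightarrow> a"
    and even: "(\<lambda>p. ereal (g (2*p))) \<longlonglongrightarrow> b"
    and gaps: "filterlim (\<lambda>p. l (Suc p) - l p) at_top sequentially"
    and ratio: "limsup (\<lambda>p. ereal (g (Suc p) * l (Suc p) / l p)) \<le> b"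
    and step: "\<And>p. 1 \<le> p \<Longrightarrow> g p * l p + 1 \<le> g (Suc p) * l (Suc p)"
    and bound: "\<And>j p. 1 \<le> j \<Longrightarrow> j \<le> p \<Longrightarrow> l j \<le> U p"
    and lower: "\<And>p. 1 \<le> p \<Longrightarrow> V p \<le> g p * l p"
    and dominated: "\<And>c. 0 \<le> c \<Longrightarrow> (\<lambda>p. (c * real p + real p * U p) / exp (V p)) \<longlonglongrightarrow> 0"
  shows "admissible a b l g"
proof -
  have nonneg: "\<And>j. 1 \<le> j \<Longrightarrow> 0 \<le> l j"
    using pos(1) less_imp_le by blast
  have sums: "(\<lambda>p. (c * real p + (\<Sum>j=1..p. l j)) / exp (g p * l p)) \<longlonglongrightarrow> 0" if "0 \<le> c" for c
    using partial_sum_div_exp_tendsto_0[OF nonneg bound lower that dominated[OF that]] .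
  have "(\<lambda>p. l p / exp (g p * l p)) \<longlonglongrightarrow> 0"
    using term_div_exp_tendsto_0[OF nonneg] sums[of 0] by simp
  then show ?thesis
    unfolding admissible_def using pos odd even gaps ratio step sums by simp
qed

lemma admissible_infinite:
  fixes \<alpha> :: "nat \<Rightarrow> real" and a :: ereal
  assumes lower: "\<And>k. 1 / (real k + 1) \<le> \<alpha> k" and half: "\<And>k. \<alpha> k / 2 \<le> \<alpha> (Suc k)"
    and lim: "(\<lambda>k. ereal (\<alpha> k)) \<longlonglongrightarrow> a"
  shows "\<exists>l g. admissible a \<infinity> l g"
proof -
  define E where "E k = exp ((2 * real k + 1)\<^sup>2)" for k
  define l where "l p = exp ((real p)\<^sup>2)" for p
  define g where "g p = (if even p then (\<alpha> (p div 2) * E (p div 2) - 1) / l p else \<alpha> (p div 2))" for p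
  have E_ge: "2 * (real k + 1) \<le> E k" for k
    using two_mult_le_exp_square[of "2 * real k + 1"] by (simp add: E_def)
  have E_grow: "4 * E k \<le> E (Suc k)" for k
  proof -
    have "(2 * real (Suc k) + 1)\<^sup>2 = (2 * real k + 1)\<^sup>2 + (8 * real k + 8)"
      by (simp add: power2_eq_square algebra_simps)
    then show ?thesis
      unfolding E_def by (simp only: four_mult_exp_le)
  qed
  have \<alpha>_pos: "0 < \<alpha> k" for k
    using lower[of k] by (rule less_le_trans[rotated]) simp
  have \<alpha>E_ge_2: "2 \<le> \<alpha> k * E k" for k
    using product_ge_two[OF lower E_ge] .
  have \<alpha>E_double: "2 * (\<alpha> k * E k) \<le> \<alpha> (Suc k) * E (Suc k)" for k
  proof -
    have "\<alpha> k / 2 * (4 * E k) \<le> \<alpha> (Suc k) * E (Suc k)"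
      using \<alpha>_pos[of "Suc k"] by (intro mult_mono half E_grow) (simp_all add: E_def)
    then show ?thesis
      by (simp add: algebra_simps)
  qed
  have x_even: "g (2 * k) * l (2 * k) = \<alpha> k * E k - 1" for k
    by (simp add: g_def l_def)
  have x_odd: "g (Suc (2 * k)) * l (Suc (2 * k)) = \<alpha> k * E k" for k
    by (simp add: g_def l_def E_def)
  have x_lower: "\<alpha> (p div 2) * E (p div 2) - 1 \<le> g p * l p" for p
    by (cases p rule: nat_even_odd_cases) (simp_all add: x_even x_odd)
  have "admissible a \<infinity> l g"
  proof (rule admissibleI[where U = l and V = "\<lambda>p. exp ((real p)\<^sup>2) / (real p + 1) - 1"])
    show "0 < l p" for p
      by (simp add: l_def)
    show "0 < g p" for p
      using \<alpha>E_ge_2[of "p div 2"] \<alpha>_pos by (simp add: g_def l_def)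
    show "(\<lambda>p. ereal (g (2 * p + 1))) \<longlonglongrightarrow> a"
      using lim by (simp add: g_def)
    show "(\<lambda>p. ereal (g (2 * p))) \<longlonglongrightarrow> \<infinity>"
      unfolding tendsto_PInfty_eq_at_top
    proof (rule filterlim_at_top_mono[OF _ always_eventually])
      show "filterlim (\<lambda>k. (E k / (real k + 1) - 1) / l (2 * k)) at_top sequentially"
        unfolding E_def l_def by real_asymp
      show "\<forall>k. (E k / (real k + 1) - 1) / l (2 * k) \<le> g (2 * k)"
        using mult_right_mono[OF lower, of "E _"] by (simp add: g_def l_def E_def divide_right_mono)
    qed
    show "filterlim (\<lambda>p. l (Suc p) - l p) at_top sequentially"
      unfolding l_def by real_asymp
    show "limsup (\<lambda>p. ereal (g (Suc p) * l (Suc p) / l p)) \<le> \<infinity>"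
      by simp
    show "g p * l p + 1 \<le> g (Suc p) * l (Suc p)" for p
    proof (cases p rule: nat_even_odd_cases)
      case (odd k)
      then have "Suc p = 2 * Suc k"
        by simp
      then have "g (Suc p) * l (Suc p) = \<alpha> (Suc k) * E (Suc k) - 1"
        by (simp only: x_even)
      moreover have "g p * l p = \<alpha> k * E k"
        using x_odd odd by simp
      ultimately show ?thesis
        using \<alpha>E_double[of k] \<alpha>E_ge_2[of k] by linarith
    qed (simp add: x_even x_odd)
    show "l j \<le> l p" if "j \<le> p" for j p
      using that by (simp add: l_def power_mono)
    show "exp ((real p)\<^sup>2) / (real p + 1) - 1 \<le> g p * l p" for p
    proof -
      have "exp ((real p)\<^sup>2) / (real p + 1) \<le> E (p div 2) / (real (p div 2) + 1)"
        unfolding E_def by (intro frac_le) auto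
      also have "\<dots> \<le> \<alpha> (p div 2) * E (p div 2)"
        using mult_right_mono[OF lower, of "E (p div 2)"] by (simp add: E_def)
      finally show ?thesis
        using x_lower[of p] by linarith
    qed
    show "(\<lambda>p. (c * real p + real p * l p) / exp (exp ((real p)\<^sup>2) / (real p + 1) - 1)) \<longlonglongrightarrow> 0"
      for c
      unfolding l_def by real_asymp
  qed
  then show ?thesis
    by blast
qed

lemma admissible_zero_finite:
  fixes b :: real
  assumes "0 \<le> b"
  shows "\<exists>l g. admissible 0 (ereal b) l g"
proof -
  define \<beta> where "\<beta> k = b + 1 / (real k + 1)" for k
  define F where "F k = exp ((real k + 2)\<^sup>2)" for k
  define l where "l p = (if even p then F (p div 2) else F (Suc (p div 2)) - real (Suc (p div 2)))" for p
  define g where "g p = (if even p then \<beta> (p div 2) else (\<beta> (p div 2) * F (p div 2) + 1) / l p)" for p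
  have F_ge: "2 * (real k + 1) \<le> F k" for k
    using two_mult_le_exp_square[of "real k + 2"] by (simp add: F_def)
  have F_grow: "4 * F k \<le> F (Suc k)" for k
  proof -
    have "(real (Suc k) + 2)\<^sup>2 = (real k + 2)\<^sup>2 + (2 * real k + 5)"
      by (simp add: power2_eq_square algebra_simps)
    then show ?thesis
      unfolding F_def by (simp only: four_mult_exp_le)
  qed
  have \<beta>_lower: "1 / (real k + 1) \<le> \<beta> k" and \<beta>_half: "\<beta> k / 2 \<le> \<beta> (Suc k)" for k
    using assms by (auto simp: \<beta>_def field_simps)
  have \<beta>_pos: "0 < \<beta> k" for k
    using assms by (simp add: \<beta>_def add_nonneg_pos)
  have \<beta>F_ge_2: "2 \<le> \<beta> k * F k" for k
    using product_ge_two[OF \<beta>_lower F_ge] .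
  have \<beta>F_double: "2 * (\<beta> k * F k) \<le> \<beta> (Suc k) * F (Suc k)" for k
  proof -
    have "\<beta> k / 2 * (4 * F k) \<le> \<beta> (Suc k) * F (Suc k)"
      using \<beta>_pos[of "Suc k"] by (intro mult_mono \<beta>_half F_grow) (simp_all add: F_def)
    then show ?thesis
      by (simp add: algebra_simps)
  qed
  have l_even: "l (2 * k) = F k" and l_odd: "l (Suc (2 * k)) = F (Suc k) - real (Suc k)" for k
    by (simp_all add: l_def)
  have l_pos: "0 < l p" for p
  proof (cases p rule: nat_even_odd_cases)
    case (even k)
    then show ?thesis
      by (simp add: l_even F_def)
  next
    case (odd k)
    then show ?thesis
      using F_ge[of "Suc k"] l_odd[of k] by simp
  qed
  have x_even: "g (2 * k) * l (2 * k) = \<beta> k * F k" for k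
    by (simp add: g_def l_even)
  have x_odd: "g (Suc (2 * k)) * l (Suc (2 * k)) = \<beta> k * F k + 1" for k
    using l_pos[of "Suc (2 * k)"] by (simp add: g_def)
  have x_lower: "\<beta> (p div 2) * F (p div 2) \<le> g p * l p" for p
    by (cases p rule: nat_even_odd_cases) (simp_all add: x_even x_odd)
  have "admissible 0 (ereal b) l g"
  proof (rule admissibleI[where U = "\<lambda>p. exp ((real p + 3)\<^sup>2)"
        and V = "\<lambda>p. exp (((real p + 3) / 2)\<^sup>2) / (real p + 1)"])
    show "0 < l p" for p
      by (rule l_pos)
    show "0 < g p" for p
      using \<beta>_pos \<beta>F_ge_2[of "p div 2"] l_pos[of p] by (simp add: g_def)
    show "(\<lambda>p. ereal (g (2 * p + 1))) \<longlonglongrightarrow> 0"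
    proof -
      have "(\<lambda>k. (\<beta> k * F k + 1) / (F (Suc k) - real (Suc k))) \<longlonglongrightarrow> 0"
        unfolding \<beta>_def F_def using assms by real_asymp
      then show ?thesis
        by (simp add: g_def l_odd zero_ereal_def)
    qed
    show "(\<lambda>p. ereal (g (2 * p))) \<longlonglongrightarrow> ereal b"
    proof -
      have "\<beta> \<longlonglongrightarrow> b"
        unfolding \<beta>_def by real_asymp
      then show ?thesis
        by (simp add: g_def)
    qed
    show "filterlim (\<lambda>p. l (Suc p) - l p) at_top sequentially"
    proof (rule filterlim_sequentially_even_odd)
      show "filterlim (\<lambda>k. l (Suc (2 * k)) - l (2 * k)) at_top sequentially"
        unfolding l_even l_odd F_def by real_asymp
      have "l (Suc (2 * k + 1)) - l (2 * k + 1) = real (Suc k)" for k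
        using l_even[of "Suc k"] l_odd[of k] by simp
      then show "filterlim (\<lambda>k. l (Suc (2 * k + 1)) - l (2 * k + 1)) at_top sequentially"
        by simp real_asymp
    qed
    have "(\<lambda>p. g (Suc p) * l (Suc p) / l p) \<longlonglongrightarrow> b"
    proof (rule filterlim_sequentially_even_odd)
      show "(\<lambda>k. g (Suc (2 * k)) * l (Suc (2 * k)) / l (2 * k)) \<longlonglongrightarrow> b"
        unfolding x_odd l_even \<beta>_def F_def using assms by real_asymp
      have "g (Suc (2 * k + 1)) * l (Suc (2 * k + 1)) / l (2 * k + 1)
          = \<beta> (Suc k) * F (Suc k) / (F (Suc k) - real (Suc k))" for k
        using x_even[of "Suc k"] l_odd[of k] by simp
      moreover have "(\<lambda>k. \<beta> (Suc k) * F (Suc k) / (F (Suc k) - real (Suc k))) \<longlonglongrightarrow> b"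
        unfolding \<beta>_def F_def using assms by real_asymp
      ultimately show "(\<lambda>k. g (Suc (2 * k + 1)) * l (Suc (2 * k + 1)) / l (2 * k + 1)) \<longlonglongrightarrow> b"
        by simp
    qed
    then show "limsup (\<lambda>p. ereal (g (Suc p) * l (Suc p) / l p)) \<le> ereal b"
      by (subst lim_imp_Limsup) auto
    show "g p * l p + 1 \<le> g (Suc p) * l (Suc p)" for p
    proof (cases p rule: nat_even_odd_cases)
      case (odd k)
      then have "Suc p = 2 * Suc k"
        by simp
      then have "g (Suc p) * l (Suc p) = \<beta> (Suc k) * F (Suc k)"
        by (simp only: x_even)
      moreover have "g p * l p = \<beta> k * F k + 1"
        using x_odd odd by simp
      ultimately show ?thesis
        using \<beta>F_double[of k] \<beta>F_ge_2[of k] by linarith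
    qed (simp add: x_even x_odd)
    show "l j \<le> exp ((real p + 3)\<^sup>2)" if "j \<le> p" for j p
    proof -
      have "l j \<le> F (Suc (j div 2))"
        by (cases j rule: nat_even_odd_cases) (simp_all add: l_even l_odd F_def)
      also have "\<dots> \<le> exp ((real p + 3)\<^sup>2)"
        using that by (simp add: F_def power_mono)
      finally show ?thesis .
    qed
    show "exp (((real p + 3) / 2)\<^sup>2) / (real p + 1) \<le> g p * l p" for p
    proof -
      have "exp (((real p + 3) / 2)\<^sup>2) / (real p + 1) \<le> F (p div 2) / (real (p div 2) + 1)"
        unfolding F_def by (intro frac_le) (auto intro!: power_mono)
      also have "\<dots> \<le> \<beta> (p div 2) * F (p div 2)"
        using mult_right_mono[OF \<beta>_lower, of "F (p div 2)"] by (simp add: F_def)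
      finally show ?thesis
        using x_lower[of p] by linarith
    qed
    show "(\<lambda>p. (c * real p + real p * exp ((real p + 3)\<^sup>2)) / exp (exp (((real p + 3) / 2)\<^sup>2) / (real p + 1)))
        \<longlonglongrightarrow> 0" for c
      by real_asymp
  qed
  then show ?thesis
    by blast
qed

lemma admissible_finite_pos:
  fixes a b :: real
  assumes "0 < a" "a \<le> b"
  shows "\<exists>l g. admissible (ereal a) (ereal b) l g"
proof -
  define r where "r = b / a"
  define l where "l p = r ^ (Suc p div 2) * (real p ^ 2 + 1) / b" for p
  define g :: "nat \<Rightarrow> real" where "g p = (if even p then b else a)" for p
  have "0 < b" "0 < r" "1 \<le> r" "a * r = b"
    using assms by (auto simp: r_def)
  have r_pow: "1 \<le> r ^ (p div 2)" "r ^ (p div 2) \<le> r ^ (Suc p div 2)" for p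
    using \<open>1 \<le> r\<close> by (auto intro!: one_le_power power_increasing div_le_mono)
  have b_mult_l: "b * l p = r ^ (Suc p div 2) * (real p ^ 2 + 1)" for p
    using \<open>0 < b\<close> by (simp add: l_def)
  have x_eq: "g p * l p = r ^ (p div 2) * (real p ^ 2 + 1)" for p
  proof (cases p rule: nat_even_odd_cases)
    case (even k)
    then show ?thesis
      using \<open>0 < b\<close> by (simp add: g_def l_def)
  next
    case (odd k)
    have "g p * l p = a * r * r ^ k * (real p ^ 2 + 1) / b"
      by (simp add: odd g_def l_def)
    then show ?thesis
      using \<open>a * r = b\<close> \<open>0 < b\<close> by (simp add: odd)
  qed
  have l_pos: "0 < l p" for p
    using r_pow(1)[of "Suc p"] \<open>0 < b\<close> unfolding l_def
    by (intro divide_pos_pos mult_pos_pos) (simp_all add: add_nonneg_pos)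
  have step: "g p * l p + 1 \<le> g (Suc p) * l (Suc p)" for p
    unfolding x_eq using r_pow[of p] by (intro scaled_step_le) (simp_all add: power2_eq_square algebra_simps)
  have gap: "(2 * real p + 1) / b \<le> l (Suc p) - l p" for p
  proof -
    have "b * l p + (2 * real p + 1) \<le> b * l (Suc p)"
      unfolding b_mult_l using r_pow(1)[of "Suc p"] r_pow(2)[of p] r_pow(2)[of "Suc p"]
      by (intro scaled_step_le) (simp_all add: power2_eq_square algebra_simps)
    then show ?thesis
      using \<open>0 < b\<close> by (simp add: field_simps)
  qed
  have "incseq l"
  proof (rule incseq_SucI)
    show "l p \<le> l (Suc p)" for p
      using gap[of p] \<open>0 < b\<close> divide_nonneg_pos[of "2 * real p + 1" b] by linarith
  qed
  have ratio: "(\<lambda>p. g (Suc p) * l (Suc p) / l p) \<longlonglongrightarrow> b"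
  proof -
    have "g (Suc p) * l (Suc p) / l p = b * (((real p + 1) ^ 2 + 1) / (real p ^ 2 + 1))" for p
    proof -
      have "0 < r ^ (Suc p div 2)"
        using r_pow(1)[of "Suc p"] by linarith
      moreover have "g (Suc p) * l (Suc p) / l p
          = r ^ (Suc p div 2) * ((real p + 1) ^ 2 + 1) / (r ^ (Suc p div 2) * (real p ^ 2 + 1) / b)"
        by (simp only: x_eq) (simp add: l_def)
      ultimately show ?thesis
        using \<open>0 < r\<close> by (simp add: add_nonneg_pos)
    qed
    moreover have "(\<lambda>p. b * (((real p + 1) ^ 2 + 1) / (real p ^ 2 + 1))) \<longlonglongrightarrow> b"
      by real_asymp
    ultimately show ?thesis
      by simp
  qed
  have "admissible (ereal a) (ereal b) l g"
  proof (rule admissibleI[where U = l and V = "\<lambda>p. a * l p"])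
    show "0 < l p" "0 < g p" for p
      using l_pos assms by (auto simp: g_def)
    show "(\<lambda>p. ereal (g (2 * p + 1))) \<longlonglongrightarrow> ereal a" "(\<lambda>p. ereal (g (2 * p))) \<longlonglongrightarrow> ereal b"
      by (simp_all add: g_def)
    show "filterlim (\<lambda>p. l (Suc p) - l p) at_top sequentially"
    proof (rule filterlim_at_top_mono[OF _ always_eventually])
      show "filterlim (\<lambda>p. (2 * real p + 1) / b) at_top sequentially"
        using \<open>0 < b\<close> by real_asymp
    qed (use gap in auto)
    show "limsup (\<lambda>p. ereal (g (Suc p) * l (Suc p) / l p)) \<le> ereal b"
      using ratio by (subst lim_imp_Limsup) auto
    show "g p * l p + 1 \<le> g (Suc p) * l (Suc p)" for p
      by (rule step)
    show "l j \<le> l p" if "j \<le> p" for j p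
      using \<open>incseq l\<close> that by (simp add: incseq_def)
    show "a * l p \<le> g p * l p" for p
      using assms l_pos[of p] by (intro mult_right_mono) (auto simp: g_def)
    show "(\<lambda>p. (c * real p + real p * l p) / exp (a * l p)) \<longlonglongrightarrow> 0" if "0 \<le> c" for c
    proof (rule linear_mult_div_exp_tendsto_0[where B = b])
      show linear: "real p \<le> b * l p" for p
      proof -
        have "real p \<le> real p ^ 2 + 1"
          using sum_squares_bound[of "real p" 1] by simp
        also have "\<dots> \<le> b * l p"
          unfolding b_mult_l using r_pow(1)[of "Suc p"] by (simp add: add_nonneg_pos)
        finally show ?thesis .
      qed
      show "filterlim l at_top sequentially"
      proof (rule filterlim_at_top_mono[OF _ always_eventually])
        show "filterlim (\<lambda>p. real p / b) at_top sequentially"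
          using \<open>0 < b\<close> by real_asymp
        show "\<forall>p. real p / b \<le> l p"
          using linear \<open>0 < b\<close> by (simp add: field_simps)
      qed
    qed (use assms that in simp_all)
  qed
  then show ?thesis
    by blast
qed

lemma controlled_decay_sequence_tendsto:
  fixes a :: ereal
  assumes "0 \<le> a"
  obtains \<alpha> :: "nat \<Rightarrow> real"
  where "\<And>k. 1 / (real k + 1) \<le> \<alpha> k" and "\<And>k. \<alpha> k / 2 \<le> \<alpha> (Suc k)"
    and "(\<lambda>k. ereal (\<alpha> k)) \<longlonglongrightarrow> a"
proof (cases a)
  case (real a')
  show ?thesis
  proof
    show "1 / (real k + 1) \<le> a' + 1 / (real k + 1)" for k
      using assms real by simp
    show "(a' + 1 / (real k + 1)) / 2 \<le> a' + 1 / (real (Suc k) + 1)" for k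
      using assms real by (simp add: field_simps)
    have "(\<lambda>k. a' + 1 / (real k + 1)) \<longlonglongrightarrow> a'"
      by real_asymp
    then show "(\<lambda>k. ereal (a' + 1 / (real k + 1))) \<longlonglongrightarrow> a"
      using real by simp
  qed
next
  case PInf
  show ?thesis
  proof
    show "1 / (real k + 1) \<le> real k + 1" for k
      by (simp add: field_simps)
    show "(real k + 1) / 2 \<le> real (Suc k) + 1" for k
      by simp
    have "filterlim (\<lambda>k. real k + 1) at_top sequentially"
      by real_asymp
    then show "(\<lambda>k. ereal (real k + 1)) \<longlonglongrightarrow> a"
      using PInf by (simp add: tendsto_PInfty_eq_at_top)
  qed
qed (use assms in simp)

theorem lemma2p4:
  fixes a b :: ereal
  assumes "0 \<le> a" and "a \<le> b"
  shows "\<exists>(l::nat \<Rightarrow> real) (g::nat \<Rightarrow> real).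
    (\<forall>p\<ge>1. l p > 0 \<and> g p > 0) \<and>
    ((\<lambda>p. ereal (g (2*p+1))) \<longlonglongrightarrow> a) \<and>
    ((\<lambda>p. ereal (g (2*p))) \<longlonglongrightarrow> b) \<and>
    filterlim (\<lambda>p. l (Suc p) - l p) at_top sequentially \<and>
    ((\<lambda>p. l p / exp (g p * l p)) \<longlonglongrightarrow> 0) \<and>
    limsup (\<lambda>p. ereal (g (Suc p) * l (Suc p) / l p)) \<le> b \<and>
    (\<forall>p\<ge>1. g p * l p + 1 \<le> g (Suc p) * l (Suc p)) \<and>
    (\<forall>c::real. c \<ge> 0 \<longrightarrow>
       ((\<lambda>p. (c * real p + (\<Sum>j=1..p. l j)) / exp (g p * l p)) \<longlonglongrightarrow> 0))"
proof -
  have "\<exists>l g. admissible a b l g"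
  proof (cases b)
    case PInf
    obtain \<alpha> where "\<And>k. 1 / (real k + 1) \<le> \<alpha> k" "\<And>k. \<alpha> k / 2 \<le> \<alpha> (Suc k)"
      and "(\<lambda>k. ereal (\<alpha> k)) \<longlonglongrightarrow> a"
      using controlled_decay_sequence_tendsto[OF assms(1)] by blast
    then show ?thesis
      unfolding PInf by (rule admissible_infinite)
  next
    case (real b')
    then obtain a' where a': "a = ereal a'" "0 \<le> a'" "a' \<le> b'"
      using assms by (cases a) auto
    show ?thesis
    proof (cases "a' = 0")
      case True
      then show ?thesis
        using admissible_zero_finite[of b'] a' real by (simp add: zero_ereal_def)
    next
      case False
      then show ?thesis
        using admissible_finite_pos[of a' b'] a' real by simp
    qed
  qed (use assms in simp)
  then show ?thesis
    unfolding admissible_def .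
qed

end
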